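(* Let $\mathcal C$ be an operadic category with set of objects $C$. Then the following data form a skew monoidal category $\mathrm{Coll}_{\mathcal C}(\mathbf{Set})$: the underlying category $\mathbf{Set}/C$; the tensor product $*$ with $(X*Y)_c=\sum_{\varphi:c\to d}X_d\times\prod_{i\in|d|}Y_{\varphi^{-1}i}$; the unit $U$ given by the set of trivial objects with its inclusion into $C$; and the structure maps $\alpha:(X*Y)*Z\to X*(Y*Z)$, $\alpha(x,\psi,y,\varphi,z)=(x,\psi\varphi,y,\varphi^\psi,z)$; $\lambda:U*X\to X$, $\lambda(u,\varphi,x)=x$; $\rho:X\to X*U$, $\rho(x)=(x,1_{\partial x},(1_{\partial x}^{-1}i)_{i\in|\partial x|})$.
   Context: Operadic categories: $\mathcal S$ is a skeleton of finite sets (objects $\mathbb N$), with fixed equivalences $R_I:\mathcal S/I\to\mathcal S^I$ sending $f:J\to I$ to its fibres. An operadic category is a category $\mathcal C$ with a functor $|\cdot|:\mathcal C\to\mathcal S$ and functors $R_c:\mathcal C/c\to\mathcal C^{|c|}$ with $|\cdot|^{|c|}\circ R_c=R_{|c|}\circ(|\cdot|/c)$; the fibre $\psi^{-1}i$ of $\psi:c\to d$ at $i\in|d|$ is the $i$-th component of $R_d(\psi)$ (so $|\psi^{-1}i|=|\psi|^{-1}i$); for $\varphi:b\to c,\psi:c\to d$, $\varphi^\psi:R_d(\psi\varphi)\to R_d(\psi)$ is $R_d$ applied to $\varphi:\psi\varphi\to\psi$ in $\mathcal C/d$, with components $\varphi^\psi_j:(\psi\varphi)^{-1}j\to\psi^{-1}j$;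 $u$ is trivial if $|u|=1$ and $R_u=\mathrm{dom}$. Axioms: fibres of identities are trivial; double slice condition: for $\psi:c\to d$, $R_c\circ(\mathrm{dom}/\psi)=(\cong)\circ(\prod_jR_{\psi^{-1}j})\circ(R_d/\psi)$ as functors $(\mathcal C/d)/\psi\to\mathcal C^{|c|}$, using $\mathcal C^{|d|}/R_d\psi\cong\prod_j\mathcal C/\psi^{-1}j$ and $\prod_j\mathcal C^{|\psi^{-1}j|}\cong\mathcal C^{|c|}$ via $|c|\cong\sum_j|\psi|^{-1}j$. Notation: an object of $\mathbf{Set}/C$ is a set $X$ with $\partial:X\to C$, and $X_c=\partial^{-1}(c)$. An element of $(X*Y)_c$ is written $(x,\varphi,y)$ with $\varphi:c\to d$, $x\in X_d$, $y=(y_i)_{i\in|d|}$, $y_i\in Y_{\varphi^{-1}i}$, and $\partial(x,\varphi,y)=c$. An element of $((X*Y)*Z)_c$ is written $(x,\psi,y,\varphi,z)$ with $\varphi:c\to d$, $\psi:d\to e$, $x\in X_e$, $y_j\in Y_{\psi^{-1}j}$ ($j\in|e|$), $z_i\in Z_{\varphi^{-1}i}$ ($i\in|d|$); its image $(x,\psi\varphi,y,\varphi^\psi,z)$ denotes the element of $X*(Y*Z)$ whose $j$-th component in $Y*Z$ is $(y_j,\varphi^\psi_j,(z_i)_{i\in|\psi^{-1}j|})$. In $U*X$ an element has form $(u,\varphi,x)$ with $\varphi:c\to u$, $u$ trivial, $x\in X_c$ (the unique fibre of $\varphi$ being $c$). A skew monoidal category is a category $\mathcal E$ with a functor $*:\mathcal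 E\times\mathcal E\to\mathcal E$, an object $U$, and natural (not necessarily invertible) maps $\alpha:(X*Y)*Z\to X*(Y*Z)$, $\lambda:U*X\to X$, $\rho:X\to X*U$ satisfying: $\lambda_U\rho_U=1_U$; $\lambda_{X*Y}\alpha_{U,X,Y}=\lambda_X*1_Y$; $\alpha_{X,Y,U}\rho_{X*Y}=1_X*\rho_Y$; $(1_X*\lambda_Y)\alpha_{X,U,Y}(\rho_X*1_Y)=1_{X*Y}$; and the pentagon $(1*\alpha)\alpha(\alpha*1)=\alpha\alpha$ as maps $((W*X)*Y)*Z\to W*(X*(Y*Z))$. *)

theory Defs
  imports Main "HOL-Library.FuncSet"
begin

text \<open>An object n of S is the finite ordinal {0..<n}; a morphism m -> n is a function
  nat => nat mapping {0..<m} into {0..<n} (only its values below m matter).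
  The fixed equivalence R_I sends f : J -> I to its fibres, each fibre f^{-1}(i)
  being identified with an ordinal via the order-preserving enumeration.\<close>

definition sfibl :: "(nat \<Rightarrow> nat) \<Rightarrow> nat \<Rightarrow> nat \<Rightarrow> nat list" where
  "sfibl f n i = filter (\<lambda>j. f j = i) [0..<n]"

text \<open>Position of j inside its fibre f^{-1}(f j) (so sfibl f n (f j) ! sidx f j = j).\<close>
definition sidx :: "(nat \<Rightarrow> nat) \<Rightarrow> nat \<Rightarrow> nat" where
  "sidx f j = length (filter (\<lambda>j'. f j' = f j) [0..<j])"

record ('o, 'm) opcat =
  obs :: "'o set"
  mors :: "'m set"
  src :: "'m \<Rightarrow> 'o"
  tgt :: "'m \<Rightarrow> 'o"
  cmp :: "'m \<Rightarrow> 'm \<Rightarrow> 'm"         \<comment> \<open>cmp g f = g \<circ> f\<close>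
  idm :: "'o \<Rightarrow> 'm"
  card_o :: "'o \<Rightarrow> nat"
  card_m :: "'m \<Rightarrow> nat \<Rightarrow> nat"
  fibre :: "'m \<Rightarrow> nat \<Rightarrow> 'o"
  fibre_m :: "'m \<Rightarrow> 'm \<Rightarrow> nat \<Rightarrow> 'm"  \<comment> \<open>fibre_m phi psi j = phi^psi_j\<close>

definition is_cat :: "('o, 'm, 'z) opcat_scheme \<Rightarrow> bool" where
  "is_cat C \<longleftrightarrow>
     (\<forall>f\<in>mors C. src C f \<in> obs C \<and> tgt C f \<in> obs C) \<and>
     (\<forall>a\<in>obs C. idm C a \<in> mors C \<and> src C (idm C a) = a \<and> tgt C (idm C a) = a) \<and>
     (\<forall>f\<in>mors C. \<forall>g\<in>mors C. tgt C f = src C g \<longrightarrow>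
        cmp C g f \<in> mors C \<and> src C (cmp C g f) = src C f \<and> tgt C (cmp C g f) = tgt C g) \<and>
     (\<forall>f\<in>mors C. \<forall>g\<in>mors C. \<forall>h\<in>mors C. tgt C f = src C g \<longrightarrow> tgt C g = src C h \<longrightarrow>
        cmp C h (cmp C g f) = cmp C (cmp C h g) f) \<and>
     (\<forall>f\<in>mors C. cmp C (idm C (tgt C f)) f = f \<and> cmp C f (idm C (src C f)) = f)"

definition card_functor :: "('o, 'm, 'z) opcat_scheme \<Rightarrow> bool" where
  "card_functor C \<longleftrightarrow>
     (\<forall>f\<in>mors C. \<forall>k<card_o C (src C f). card_m C f k < card_o C (tgt C f)) \<and>
     (\<forall>a\<in>obs C. \<forall>k<card_o C a. card_m C (idm C a) k = k) \<and>
     (\<forall>f\<in>mors C. \<forall>g\<in>mors C. tgt C f = src C g \<longrightarrow>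
        (\<forall>k<card_o C (src C f). card_m C (cmp C g f) k = card_m C g (card_m C f k)))"

text \<open>Each R_d : C/d -> C^{|d|} is a functor (objects of C/d: psi with tgt psi = d;
  a morphism phi : psi phi -> psi of C/d is sent to (fibre_m phi psi j)_j).\<close>
definition fibre_functors :: "('o, 'm, 'z) opcat_scheme \<Rightarrow> bool" where
  "fibre_functors C \<longleftrightarrow>
     (\<forall>\<psi>\<in>mors C. \<forall>i<card_o C (tgt C \<psi>). fibre C \<psi> i \<in> obs C) \<and>
     (\<forall>\<phi>\<in>mors C. \<forall>\<psi>\<in>mors C. tgt C \<phi> = src C \<psi> \<longrightarrow> (\<forall>i<card_o C (tgt C \<psi>).
        fibre_m C \<phi> \<psi> i \<in> mors C \<and>
        src C (fibre_m C \<phi> \<psi> i) = fibre C (cmp C \<psi> \<phi>) i \<and>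
        tgt C (fibre_m C \<phi> \<psi> i) = fibre C \<psi> i)) \<and>
     (\<forall>\<psi>\<in>mors C. \<forall>i<card_o C (tgt C \<psi>).
        fibre_m C (idm C (src C \<psi>)) \<psi> i = idm C (fibre C \<psi> i)) \<and>
     (\<forall>\<phi>1\<in>mors C. \<forall>\<phi>2\<in>mors C. \<forall>\<psi>\<in>mors C.
        tgt C \<phi>1 = src C \<phi>2 \<longrightarrow> tgt C \<phi>2 = src C \<psi> \<longrightarrow> (\<forall>i<card_o C (tgt C \<psi>).
        fibre_m C (cmp C \<phi>2 \<phi>1) \<psi> i =
          cmp C (fibre_m C \<phi>2 \<psi> i) (fibre_m C \<phi>1 (cmp C \<psi> \<phi>2) i)))"

text \<open>|.|^{|c|} o R_c = R_{|c|} o (|.|/c), on objects and on morphisms.\<close>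
definition fibre_card_compat :: "('o, 'm, 'z) opcat_scheme \<Rightarrow> bool" where
  "fibre_card_compat C \<longleftrightarrow>
     (\<forall>\<psi>\<in>mors C. \<forall>i<card_o C (tgt C \<psi>).
        card_o C (fibre C \<psi> i) = length (sfibl (card_m C \<psi>) (card_o C (src C \<psi>)) i)) \<and>
     (\<forall>\<phi>\<in>mors C. \<forall>\<psi>\<in>mors C. tgt C \<phi> = src C \<psi> \<longrightarrow> (\<forall>i<card_o C (tgt C \<psi>).
        \<forall>k<card_o C (fibre C (cmp C \<psi> \<phi>) i).
          card_m C (fibre_m C \<phi> \<psi> i) k =
            sidx (card_m C \<psi>)
              (card_m C \<phi> (sfibl (card_m C (cmp C \<psi> \<phi>)) (card_o C (src C \<phi>)) i ! k))))"

definition trivial_ob :: "('o, 'm, 'z) opcat_scheme \<Rightarrow> 'o \<Rightarrow> bool" where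
  "trivial_ob C u \<longleftrightarrow> u \<in> obs C \<and> card_o C u = 1 \<and>
     (\<forall>f\<in>mors C. tgt C f = u \<longrightarrow> fibre C f 0 = src C f) \<and>
     (\<forall>\<phi>\<in>mors C. \<forall>f\<in>mors C. tgt C \<phi> = src C f \<longrightarrow> tgt C f = u \<longrightarrow> fibre_m C \<phi> f 0 = \<phi>)"

text \<open>Double slice condition, on objects and on morphisms of (C/d)/psi, where the
  isomorphism prod_j C^{|psi^{-1} j|} = C^{|c|} sends the index k < |c| to the pair
  (|psi| k, position of k in the fibre of |psi| over |psi| k).\<close>
definition double_slice :: "('o, 'm, 'z) opcat_scheme \<Rightarrow> bool" where
  "double_slice C \<longleftrightarrow>
     (\<forall>\<phi>\<in>mors C. \<forall>\<psi>\<in>mors C. tgt C \<phi> = src C \<psi> \<longrightarrow> (\<forall>k<card_o C (src C \<psi>).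
        fibre C \<phi> k = fibre C (fibre_m C \<phi> \<psi> (card_m C \<psi> k)) (sidx (card_m C \<psi>) k))) \<and>
     (\<forall>\<sigma>\<in>mors C. \<forall>\<phi>\<in>mors C. \<forall>\<psi>\<in>mors C. tgt C \<sigma> = src C \<phi> \<longrightarrow> tgt C \<phi> = src C \<psi> \<longrightarrow>
        (\<forall>k<card_o C (src C \<psi>).
          fibre_m C \<sigma> \<phi> k =
            fibre_m C (fibre_m C \<sigma> (cmp C \<psi> \<phi>) (card_m C \<psi> k))
                      (fibre_m C \<phi> \<psi> (card_m C \<psi> k)) (sidx (card_m C \<psi>) k)))"

definition operadic_category :: "('o, 'm, 'z) opcat_scheme \<Rightarrow> bool" where
  "operadic_category C \<longleftrightarrow> is_cat C \<and> card_functor C \<and> fibre_functors C \<and>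
     fibre_card_compat C \<and>
     (\<forall>a\<in>obs C. \<forall>i<card_o C a. trivial_ob C (fibre C (idm C a) i)) \<and>
     double_slice C"

definition is_category ::
  "'x set \<Rightarrow> ('x \<Rightarrow> 'x \<Rightarrow> 'f set) \<Rightarrow> ('f \<Rightarrow> 'f \<Rightarrow> 'f) \<Rightarrow> ('x \<Rightarrow> 'f) \<Rightarrow> bool" where
  "is_category Ob Hom cp idt \<longleftrightarrow>
     (\<forall>A\<in>Ob. idt A \<in> Hom A A) \<and>
     (\<forall>A\<in>Ob. \<forall>B\<in>Ob. \<forall>D\<in>Ob. \<forall>f\<in>Hom A B. \<forall>g\<in>Hom B D. cp g f \<in> Hom A D) \<and>
     (\<forall>A\<in>Ob. \<forall>B\<in>Ob. \<forall>f\<in>Hom A B. cp (idt B) f = f \<and> cp f (idt A) = f) \<and>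
     (\<forall>A\<in>Ob. \<forall>B\<in>Ob. \<forall>D\<in>Ob. \<forall>E\<in>Ob. \<forall>f\<in>Hom A B. \<forall>g\<in>Hom B D. \<forall>h\<in>Hom D E.
        cp h (cp g f) = cp (cp h g) f)"

definition skew_monoidal_category ::
  "'x set \<Rightarrow> ('x \<Rightarrow> 'x \<Rightarrow> 'f set) \<Rightarrow> ('f \<Rightarrow> 'f \<Rightarrow> 'f) \<Rightarrow> ('x \<Rightarrow> 'f) \<Rightarrow>
   ('x \<Rightarrow> 'x \<Rightarrow> 'x) \<Rightarrow> ('f \<Rightarrow> 'f \<Rightarrow> 'f) \<Rightarrow> 'x \<Rightarrow>
   ('x \<Rightarrow> 'x \<Rightarrow> 'x \<Rightarrow> 'f) \<Rightarrow> ('x \<Rightarrow> 'f) \<Rightarrow> ('x \<Rightarrow> 'f) \<Rightarrow> bool" where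
  "skew_monoidal_category Ob Hom cp idt T Tm U alph lam rh \<longleftrightarrow>
     is_category Ob Hom cp idt \<and>
     \<comment> \<open>the tensor is a functor E x E -> E\<close>
     (\<forall>A\<in>Ob. \<forall>B\<in>Ob. T A B \<in> Ob) \<and>
     (\<forall>A\<in>Ob. \<forall>A'\<in>Ob. \<forall>B\<in>Ob. \<forall>B'\<in>Ob. \<forall>f\<in>Hom A A'. \<forall>g\<in>Hom B B'.
        Tm f g \<in> Hom (T A B) (T A' B')) \<and>
     (\<forall>A\<in>Ob. \<forall>B\<in>Ob. Tm (idt A) (idt B) = idt (T A B)) \<and>
     (\<forall>A\<in>Ob. \<forall>A'\<in>Ob. \<forall>A''\<in>Ob. \<forall>B\<in>Ob. \<forall>B'\<in>Ob. \<forall>B''\<in>Ob.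
        \<forall>f\<in>Hom A A'. \<forall>f'\<in>Hom A' A''. \<forall>g\<in>Hom B B'. \<forall>g'\<in>Hom B' B''.
        Tm (cp f' f) (cp g' g) = cp (Tm f' g') (Tm f g)) \<and>
     U \<in> Ob \<and>
     \<comment> \<open>components\<close>
     (\<forall>X\<in>Ob. \<forall>Y\<in>Ob. \<forall>Z\<in>Ob. alph X Y Z \<in> Hom (T (T X Y) Z) (T X (T Y Z))) \<and>
     (\<forall>X\<in>Ob. lam X \<in> Hom (T U X) X) \<and>
     (\<forall>X\<in>Ob. rh X \<in> Hom X (T X U)) \<and>
     \<comment> \<open>naturality\<close>
     (\<forall>X\<in>Ob. \<forall>X'\<in>Ob. \<forall>Y\<in>Ob. \<forall>Y'\<in>Ob. \<forall>Z\<in>Ob. \<forall>Z'\<in>Ob.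
        \<forall>f\<in>Hom X X'. \<forall>g\<in>Hom Y Y'. \<forall>h\<in>Hom Z Z'.
        cp (alph X' Y' Z') (Tm (Tm f g) h) = cp (Tm f (Tm g h)) (alph X Y Z)) \<and>
     (\<forall>X\<in>Ob. \<forall>X'\<in>Ob. \<forall>f\<in>Hom X X'. cp f (lam X) = cp (lam X') (Tm (idt U) f)) \<and>
     (\<forall>X\<in>Ob. \<forall>X'\<in>Ob. \<forall>f\<in>Hom X X'. cp (rh X') f = cp (Tm f (idt U)) (rh X)) \<and>
     \<comment> \<open>axioms\<close>
     cp (lam U) (rh U) = idt U \<and>
     (\<forall>X\<in>Ob. \<forall>Y\<in>Ob. cp (lam (T X Y)) (alph U X Y) = Tm (lam X) (idt Y)) \<and>
     (\<forall>X\<in>Ob. \<forall>Y\<in>Ob. cp (alph X Y U) (rh (T X Y)) = Tm (idt X) (rh Y)) \<and>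
     (\<forall>X\<in>Ob. \<forall>Y\<in>Ob.
        cp (cp (Tm (idt X) (lam Y)) (alph X U Y)) (Tm (rh X) (idt Y)) = idt (T X Y)) \<and>
     (\<forall>W\<in>Ob. \<forall>X\<in>Ob. \<forall>Y\<in>Ob. \<forall>Z\<in>Ob.
        cp (cp (Tm (idt W) (alph X Y Z)) (alph W (T X Y) Z)) (Tm (alph W X Y) (idt Z)) =
        cp (alph W X (T Y Z)) (alph (T W X) Y Z))"

text \<open>A universe of elements, closed under the constructions used: Base a for arbitrary
  elements (any set can be placed in the universe by choosing the type 'a), TObj u for
  elements of the unit U, and Tr x phi ys for the element (x, phi, y) of X * Y, where
  ys is the |d|-tuple (y_i)_{i<|d|} given as a list.\<close>
datatype ('a, 'o, 'm) elt =
    Base 'a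
  | TObj (el_obj: 'o)
  | Tr (el_x: "('a, 'o, 'm) elt") (el_mor: 'm) (el_ys: "('a, 'o, 'm) elt list")

text \<open>Objects of Set/C: a set X with partial_ : X -> C (extensional outside X).\<close>
type_synonym ('a, 'o, 'm) cobj = "('a, 'o, 'm) elt set \<times> (('a, 'o, 'm) elt \<Rightarrow> 'o)"
text \<open>Morphisms of Set/C: (source, underlying function, target).\<close>
type_synonym ('a, 'o, 'm) cmor =
  "('a, 'o, 'm) cobj \<times> (('a, 'o, 'm) elt \<Rightarrow> ('a, 'o, 'm) elt) \<times> ('a, 'o, 'm) cobj"

definition coll_obs :: "('o, 'm, 'z) opcat_scheme \<Rightarrow> ('a, 'o, 'm) cobj set" where
  "coll_obs C = {(X, d). d \<in> X \<rightarrow> obs C \<and> d \<in> extensional X}"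

definition coll_hom :: "('a, 'o, 'm) cobj \<Rightarrow> ('a, 'o, 'm) cobj \<Rightarrow> ('a, 'o, 'm) cmor set" where
  "coll_hom A B = {(A, f, B) | f. f \<in> fst A \<rightarrow> fst B \<and> f \<in> extensional (fst A) \<and>
                                 (\<forall>x\<in>fst A. snd B (f x) = snd A x)}"

definition coll_comp :: "('a, 'o, 'm) cmor \<Rightarrow> ('a, 'o, 'm) cmor \<Rightarrow> ('a, 'o, 'm) cmor" where
  "coll_comp G F = (fst F, restrict (fst (snd G) \<circ> fst (snd F)) (fst (fst F)), snd (snd G))"

definition coll_id :: "('a, 'o, 'm) cobj \<Rightarrow> ('a, 'o, 'm) cmor" where
  "coll_id A = (A, restrict (\<lambda>x. x) (fst A), A)"

definition tens_carrier ::
  "('o, 'm, 'z) opcat_scheme \<Rightarrow> ('a, 'o, 'm) cobj \<Rightarrow> ('a, 'o, 'm) cobj \<Rightarrow> ('a, 'o, 'm) elt set" where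
  "tens_carrier C A B =
     {Tr x \<phi> ys | x \<phi> ys. \<phi> \<in> mors C \<and> x \<in> fst A \<and> snd A x = tgt C \<phi> \<and>
        length ys = card_o C (tgt C \<phi>) \<and>
        (\<forall>i<length ys. ys ! i \<in> fst B \<and> snd B (ys ! i) = fibre C \<phi> i)}"

definition coll_tens ::
  "('o, 'm, 'z) opcat_scheme \<Rightarrow> ('a, 'o, 'm) cobj \<Rightarrow> ('a, 'o, 'm) cobj \<Rightarrow> ('a, 'o, 'm) cobj" where
  "coll_tens C A B = (tens_carrier C A B, restrict (\<lambda>e. src C (el_mor e)) (tens_carrier C A B))"

definition coll_tensm ::
  "('o, 'm, 'z) opcat_scheme \<Rightarrow> ('a, 'o, 'm) cmor \<Rightarrow> ('a, 'o, 'm) cmor \<Rightarrow> ('a, 'o, 'm) cmor" where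
  "coll_tensm C F G =
     (coll_tens C (fst F) (fst G),
      restrict (\<lambda>e. Tr (fst (snd F) (el_x e)) (el_mor e) (map (fst (snd G)) (el_ys e)))
               (tens_carrier C (fst F) (fst G)),
      coll_tens C (snd (snd F)) (snd (snd G)))"

definition coll_unit :: "('o, 'm, 'z) opcat_scheme \<Rightarrow> ('a, 'o, 'm) cobj" where
  "coll_unit C = ({TObj u | u. trivial_ob C u},
                  restrict el_obj {TObj u | u. trivial_ob C u})"

text \<open>alpha(x, psi, y, phi, z) = (x, psi phi, y, phi^psi, z): the j-th component is
  (y_j, phi^psi_j, (z_i)_{i in |psi^{-1} j|}).\<close>
definition coll_alpha ::
  "('o, 'm, 'z) opcat_scheme \<Rightarrow> ('a, 'o, 'm) cobj \<Rightarrow> ('a, 'o, 'm) cobj \<Rightarrow> ('a, 'o, 'm) cobj \<Rightarrow>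
   ('a, 'o, 'm) cmor" where
  "coll_alpha C X Y Z =
     (coll_tens C (coll_tens C X Y) Z,
      restrict (\<lambda>e. let \<phi> = el_mor e; zs = el_ys e; w = el_x e;
                         x = el_x w; \<psi> = el_mor w; ys = el_ys w in
                Tr x (cmp C \<psi> \<phi>)
                  (map (\<lambda>j. Tr (ys ! j) (fibre_m C \<phi> \<psi> j)
                               (map (\<lambda>i. zs ! i) (sfibl (card_m C \<psi>) (card_o C (src C \<psi>)) j)))
                       [0..<card_o C (tgt C \<psi>)]))
               (tens_carrier C (coll_tens C X Y) Z),
      coll_tens C X (coll_tens C Y Z))"

definition coll_lambda ::
  "('o, 'm, 'z) opcat_scheme \<Rightarrow> ('a, 'o, 'm) cobj \<Rightarrow> ('a, 'o, 'm) cmor" where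
  "coll_lambda C X =
     (coll_tens C (coll_unit C) X,
      restrict (\<lambda>e. el_ys e ! 0) (tens_carrier C (coll_unit C) X),
      X)"

definition coll_rho ::
  "('o, 'm, 'z) opcat_scheme \<Rightarrow> ('a, 'o, 'm) cobj \<Rightarrow> ('a, 'o, 'm) cmor" where
  "coll_rho C X =
     (X,
      restrict (\<lambda>x. Tr x (idm C (snd X x))
                       (map (\<lambda>i. TObj (fibre C (idm C (snd X x)) i)) [0..<card_o C (snd X x)]))
               (fst X),
      coll_tens C X (coll_unit C))"

end

theory Submission
  imports Defs
begin

text \<open>
  An element of (X * Y) * Z is a two-level tree (x, \<psi>, y, \<phi>, z), and \<alpha> regroups its leaves z
  along the fibres of |\<psi>|.  The regrouped tree lies in X * (Y * Z) by the object part of the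
  double slice condition, which identifies \<phi>\<inverse> k with a fibre of \<phi>^\<psi> over |\<psi>| k.  Naturality
  holds because the structure maps only rearrange elements, and the unit axioms reduce to
  the facts that fibres of identities are trivial and that a morphism into a trivial object
  is its own fibre.  In the pentagon both composites send (((w, \<chi>, x), \<psi>, y), \<phi>, z) to a tree
  over \<chi>\<psi>\<phi>; their components agree by functoriality of the fibre functors, by the morphism
  part of the double slice condition, and because the fibre index lists of |\<psi>| refine those
  of |\<chi>\<psi>|.
\<close>

section \<open>Fibres in the skeleton of finite sets\<close>

lemma sfibl_nth:
  assumes "k < length (sfibl f n i)"
  shows "sfibl f n i ! k < n" "f (sfibl f n i ! k) = i"
  using nth_mem[OF assms] by (auto simp: sfibl_def)

lemma sidx_sfibl:
  assumes "j < n"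
  shows "sidx f j < length (sfibl f n (f j))" "sfibl f n (f j) ! sidx f j = j"
proof -
  have "[0..<n] = [0..<j] @ j # [Suc j..<n]"
    using assms upt_add_eq_append[of 0 j "n - j"] upt_conv_Cons[of j n] by simp
  then show "sidx f j < length (sfibl f n (f j))" "sfibl f n (f j) ! sidx f j = j"
    unfolding sidx_def sfibl_def by (simp_all add: nth_append)
qed

lemma sfibl_sidx:
  assumes "k < length (sfibl f n i)"
  shows "sidx f (sfibl f n i ! k) = k"
proof -
  define j where "j = sfibl f n i ! k"
  have "j < n" "f j = i" using sfibl_nth[OF assms] j_def by auto
  then have "sfibl f n i ! sidx f j = j" "sidx f j < length (sfibl f n i)"
    using sidx_sfibl[of j n f] by auto
  moreover have "distinct (sfibl f n i)" by (simp add: sfibl_def)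
  ultimately show ?thesis using assms j_def nth_eq_iff_index_eq by metis
qed

lemma sfibl_nth_eq_iff:
  assumes "a < n" "l < length (sfibl f n k)"
  shows "sfibl f n k ! l = a \<longleftrightarrow> f a = k \<and> sidx f a = l"
  using sfibl_nth[OF assms(2)] sfibl_sidx[OF assms(2)] sidx_sfibl[OF assms(1), of f] by auto

lemma sfibl_cong:
  assumes "\<And>k. k < n \<Longrightarrow> f k = g k"
  shows "sfibl f n i = sfibl g n i"
  unfolding sfibl_def using assms by (intro filter_cong) auto

lemma sfibl_id: "j < n \<Longrightarrow> sfibl (\<lambda>k. k) n j = [j]"
  unfolding sfibl_def by (induction n) (auto simp: filter_empty_conv)

lemma map_nth_filter: "map ((!) L) (filter (\<lambda>m. P (L ! m)) [0..<length L]) = filter P L"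
  using filter_map[of P "(!) L" "[0..<length L]"] by (simp add: map_nth comp_def)

section \<open>The category of collections\<close>

abbreviation coll_fun :: "('a, 'o, 'm) cmor \<Rightarrow> ('a, 'o, 'm) elt \<Rightarrow> ('a, 'o, 'm) elt" where
  "coll_fun F \<equiv> fst (snd F)"

lemma coll_homE:
  assumes "F \<in> coll_hom A B"
  obtains f where "F = (A, f, B)" "f \<in> fst A \<rightarrow> fst B" "f \<in> extensional (fst A)"
    "\<And>x. x \<in> fst A \<Longrightarrow> snd B (f x) = snd A x"
  using assms unfolding coll_hom_def by auto

lemma coll_hom_app:
  assumes "F \<in> coll_hom A B" "x \<in> fst A"
  shows "coll_fun F x \<in> fst B" "snd B (coll_fun F x) = snd A x"
  using assms by (auto elim!: coll_homE)

lemma coll_homI: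
  assumes "\<And>x. x \<in> fst A \<Longrightarrow> f x \<in> fst B" "\<And>x. x \<in> fst A \<Longrightarrow> snd B (f x) = snd A x"
  shows "(A, restrict f (fst A), B) \<in> coll_hom A B"
  unfolding coll_hom_def using assms by auto

lemma coll_hom_eqI:
  assumes "F \<in> coll_hom A B" "G \<in> coll_hom A B" "\<And>x. x \<in> fst A \<Longrightarrow> coll_fun F x = coll_fun G x"
  shows "F = G"
proof -
  obtain f where f: "F = (A, f, B)" "f \<in> extensional (fst A)" using assms(1) by (auto elim!: coll_homE)
  obtain g where g: "G = (A, g, B)" "g \<in> extensional (fst A)" using assms(2) by (auto elim!: coll_homE)
  have "f = g" using f g assms(3) by (intro extensionalityI[of _ "fst A"]) auto
  then show ?thesis using f g by simp
qed

lemma coll_comp_hom: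
  assumes "F \<in> coll_hom A B" "G \<in> coll_hom B D"
  shows "coll_comp G F \<in> coll_hom A D"
proof -
  obtain f where f: "F = (A, f, B)" using assms(1) by (auto elim!: coll_homE)
  obtain g where g: "G = (B, g, D)" using assms(2) by (auto elim!: coll_homE)
  have "coll_comp G F = (A, restrict (g \<circ> f) (fst A), D)"
    unfolding coll_comp_def f g by simp
  moreover have "g (f x) \<in> fst D" "snd D (g (f x)) = snd A x" if "x \<in> fst A" for x
    using coll_hom_app[OF assms(1) that] coll_hom_app[OF assms(2)] f g by auto
  ultimately show ?thesis by (auto intro!: coll_homI)
qed

lemma coll_comp_app:
  "F \<in> coll_hom A B \<Longrightarrow> x \<in> fst A \<Longrightarrow> coll_fun (coll_comp G F) x = coll_fun G (coll_fun F x)"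
  unfolding coll_comp_def by (auto elim!: coll_homE)

lemma coll_id_hom: "coll_id A \<in> coll_hom A A"
  unfolding coll_id_def by (rule coll_homI) auto

lemma coll_id_app: "x \<in> fst A \<Longrightarrow> coll_fun (coll_id A) x = x"
  unfolding coll_id_def by simp

lemma map_coll_id: "set xs \<subseteq> fst A \<Longrightarrow> map (coll_fun (coll_id A)) xs = xs"
  by (induction xs) (auto simp: coll_id_app)

lemma coll_is_category: "is_category (coll_obs C :: ('a, 'o, 'm) cobj set) coll_hom coll_comp coll_id"
  unfolding is_category_def
proof (intro conjI ballI)
  fix A B :: "('a, 'o, 'm) cobj" and f assume f: "f \<in> coll_hom A B"
  show "coll_comp (coll_id B) f = f"
    by (rule coll_hom_eqI[OF coll_comp_hom[OF f coll_id_hom] f])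
      (simp add: coll_comp_app[OF f] coll_id_app coll_hom_app[OF f])
  show "coll_comp f (coll_id A) = f"
    by (rule coll_hom_eqI[OF coll_comp_hom[OF coll_id_hom f] f])
      (simp add: coll_comp_app[OF coll_id_hom] coll_id_app)
next
  fix A B D E :: "('a, 'o, 'm) cobj" and f g h assume f: "f \<in> coll_hom A B" and g: "g \<in> coll_hom B D" and h: "h \<in> coll_hom D E"
  show "coll_comp h (coll_comp g f) = coll_comp (coll_comp h g) f"
    by (rule coll_hom_eqI[OF coll_comp_hom[OF coll_comp_hom[OF f g] h]
          coll_comp_hom[OF f coll_comp_hom[OF g h]]])
      (simp add: coll_comp_app[OF coll_comp_hom[OF f g]] coll_comp_app[OF f] coll_comp_app[OF g]
        coll_hom_app[OF f])
qed (auto intro: coll_id_hom coll_comp_hom)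

lemma coll_obs_snd: "X \<in> coll_obs C \<Longrightarrow> x \<in> fst X \<Longrightarrow> snd X x \<in> obs C"
  unfolding coll_obs_def by auto

lemma tens_carrier_iff:
  "Tr x \<phi> ys \<in> tens_carrier C A B \<longleftrightarrow> \<phi> \<in> mors C \<and> x \<in> fst A \<and> snd A x = tgt C \<phi> \<and>
     length ys = card_o C (tgt C \<phi>) \<and> (\<forall>i<length ys. ys ! i \<in> fst B \<and> snd B (ys ! i) = fibre C \<phi> i)"
  unfolding tens_carrier_def by auto

lemma fst_coll_tens [simp]: "fst (coll_tens C A B) = tens_carrier C A B"
  unfolding coll_tens_def by simp

lemma snd_coll_tens [simp]:
  "Tr x \<phi> ys \<in> tens_carrier C A B \<Longrightarrow> snd (coll_tens C A B) (Tr x \<phi> ys) = src C \<phi>"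
  unfolding coll_tens_def by simp

lemma coll_tensE:
  assumes "e \<in> fst (coll_tens C A B)"
  obtains x \<phi> ys where "e = Tr x \<phi> ys" "Tr x \<phi> ys \<in> tens_carrier C A B"
  using assms unfolding fst_coll_tens tens_carrier_def by auto

lemma coll_tens2E:
  assumes "e \<in> fst (coll_tens C (coll_tens C X Y) Z)"
  obtains x \<psi> ys \<phi> zs where "e = Tr (Tr x \<psi> ys) \<phi> zs"
    "Tr (Tr x \<psi> ys) \<phi> zs \<in> tens_carrier C (coll_tens C X Y) Z"
  using assms unfolding fst_coll_tens tens_carrier_def by auto

lemma tens2_carrierD:
  assumes "Tr (Tr x \<psi> ys) \<phi> zs \<in> tens_carrier C (coll_tens C X Y) Z"
  shows "Tr x \<psi> ys \<in> tens_carrier C X Y" "\<phi> \<in> mors C" "tgt C \<phi> = src C \<psi>"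
    "\<psi> \<in> mors C" "x \<in> fst X" "snd X x = tgt C \<psi>"
    "length ys = card_o C (tgt C \<psi>)" "\<And>j. j < length ys \<Longrightarrow> ys ! j \<in> fst Y \<and> snd Y (ys ! j) = fibre C \<psi> j"
    "length zs = card_o C (src C \<psi>)" "\<And>i. i < length zs \<Longrightarrow> zs ! i \<in> fst Z \<and> snd Z (zs ! i) = fibre C \<phi> i"
  using assms by (auto simp: tens_carrier_iff)

lemma coll_tensm_app:
  assumes "F \<in> coll_hom A A'" "G \<in> coll_hom B B'" "e \<in> tens_carrier C A B"
  shows "coll_fun (coll_tensm C F G) e = Tr (coll_fun F (el_x e)) (el_mor e) (map (coll_fun G) (el_ys e))"
  using assms unfolding coll_tensm_def by (auto elim!: coll_homE)

lemma coll_tensm_hom: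
  assumes F: "F \<in> coll_hom A A'" and G: "G \<in> coll_hom B B'"
  shows "coll_tensm C F G \<in> coll_hom (coll_tens C A B) (coll_tens C A' B')"
proof -
  have "coll_tensm C F G = (coll_tens C A B,
      restrict (\<lambda>e. Tr (coll_fun F (el_x e)) (el_mor e) (map (coll_fun G) (el_ys e))) (fst (coll_tens C A B)),
      coll_tens C A' B')"
    using F G unfolding coll_tensm_def by (auto elim!: coll_homE)
  also have "\<dots> \<in> coll_hom (coll_tens C A B) (coll_tens C A' B')"
  proof (rule coll_homI)
    fix e assume "e \<in> fst (coll_tens C A B)"
    then obtain x \<phi> ys where "e = Tr x \<phi> ys" "Tr x \<phi> ys \<in> tens_carrier C A B"
      by (rule coll_tensE)
    moreover have "Tr (coll_fun F x) \<phi> (map (coll_fun G) ys) \<in> tens_carrier C A' B'"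
      if "Tr x \<phi> ys \<in> tens_carrier C A B" for x \<phi> ys
      using that F G by (auto simp: tens_carrier_iff coll_hom_app)
    ultimately show "Tr (coll_fun F (el_x e)) (el_mor e) (map (coll_fun G) (el_ys e)) \<in> fst (coll_tens C A' B')"
      and "snd (coll_tens C A' B') (Tr (coll_fun F (el_x e)) (el_mor e) (map (coll_fun G) (el_ys e))) =
        snd (coll_tens C A B) e"
      by auto
  qed
  finally show ?thesis .
qed

lemma coll_tensm_id: "coll_tensm C (coll_id A) (coll_id B) = coll_id (coll_tens C A B)"
proof (rule coll_hom_eqI[OF coll_tensm_hom[OF coll_id_hom coll_id_hom] coll_id_hom])
  fix e assume "e \<in> fst (coll_tens C A B)"
  then obtain x \<phi> ys where e: "e = Tr x \<phi> ys" and m: "Tr x \<phi> ys \<in> tens_carrier C A B"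
    by (rule coll_tensE)
  have "set ys \<subseteq> fst B" using m by (auto simp: tens_carrier_iff in_set_conv_nth)
  then show "coll_fun (coll_tensm C (coll_id A) (coll_id B)) e = coll_fun (coll_id (coll_tens C A B)) e"
    using m by (simp add: e coll_tensm_app[OF coll_id_hom coll_id_hom m] coll_id_app map_coll_id
        tens_carrier_iff)
qed

lemma coll_tensm_comp:
  assumes f: "f \<in> coll_hom A A'" and f': "f' \<in> coll_hom A' A''"
    and g: "g \<in> coll_hom B B'" and g': "g' \<in> coll_hom B' B''"
  shows "coll_tensm C (coll_comp f' f) (coll_comp g' g) = coll_comp (coll_tensm C f' g') (coll_tensm C f g)"
proof (rule coll_hom_eqI[OF coll_tensm_hom[OF coll_comp_hom[OF f f'] coll_comp_hom[OF g g']]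
      coll_comp_hom[OF coll_tensm_hom[OF f g] coll_tensm_hom[OF f' g']]])
  fix e assume e: "e \<in> fst (coll_tens C A B)"
  then obtain x \<phi> ys where e_eq: "e = Tr x \<phi> ys" and m: "Tr x \<phi> ys \<in> tens_carrier C A B"
    by (rule coll_tensE)
  have fe: "coll_fun (coll_tensm C f g) e \<in> tens_carrier C A' B'"
    using coll_hom_app(1)[OF coll_tensm_hom[OF f g] e] by simp
  have "x \<in> fst A" "\<And>y. y \<in> set ys \<Longrightarrow> y \<in> fst B"
    using m by (auto simp: tens_carrier_iff in_set_conv_nth)
  then show "coll_fun (coll_tensm C (coll_comp f' f) (coll_comp g' g)) e =
        coll_fun (coll_comp (coll_tensm C f' g') (coll_tensm C f g)) e"
    using fe m unfolding e_eq
    by (simp add: coll_comp_app[OF coll_tensm_hom[OF f g]] coll_tensm_app[OF f g m]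
        coll_tensm_app[OF f' g'] coll_tensm_app[OF coll_comp_hom[OF f f'] coll_comp_hom[OF g g'] m]
        coll_comp_app[OF f] coll_comp_app[OF g])
qed

lemma coll_unit_iff: "x \<in> fst (coll_unit C) \<longleftrightarrow> (\<exists>u. x = TObj u \<and> trivial_ob C u)"
  unfolding coll_unit_def by auto

lemma TObj_in_coll_unit [simp]: "TObj u \<in> fst (coll_unit C) \<longleftrightarrow> trivial_ob C u"
  unfolding coll_unit_def by auto

lemma snd_coll_unit [simp]: "trivial_ob C u \<Longrightarrow> snd (coll_unit C) (TObj u) = u"
  unfolding coll_unit_def by auto

definition unit_tuple :: "('o, 'm, 'z) opcat_scheme \<Rightarrow> 'o \<Rightarrow> ('a, 'o, 'm) elt list" where
  "unit_tuple C c = map (\<lambda>i. TObj (fibre C (idm C c) i)) [0..<card_o C c]"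

lemma coll_rho_app:
  "x \<in> fst X \<Longrightarrow> coll_fun (coll_rho C X) x = Tr x (idm C (snd X x)) (unit_tuple C (snd X x))"
  unfolding coll_rho_def unit_tuple_def by simp

lemma coll_lambda_app: "e \<in> tens_carrier C (coll_unit C) X \<Longrightarrow> coll_fun (coll_lambda C X) e = el_ys e ! 0"
  unfolding coll_lambda_def by simp

abbreviation fibre_idx :: "('o, 'm, 'z) opcat_scheme \<Rightarrow> 'm \<Rightarrow> nat \<Rightarrow> nat list" where
  "fibre_idx C \<psi> j \<equiv> sfibl (card_m C \<psi>) (card_o C (src C \<psi>)) j"

definition alpha_tuple ::
  "('o, 'm, 'z) opcat_scheme \<Rightarrow> 'm \<Rightarrow> 'm \<Rightarrow> ('a, 'o, 'm) elt list \<Rightarrow> ('a, 'o, 'm) elt list \<Rightarrow>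
   ('a, 'o, 'm) elt list" where
  "alpha_tuple C \<psi> \<phi> ys zs =
     map (\<lambda>j. Tr (ys ! j) (fibre_m C \<phi> \<psi> j) (map ((!) zs) (fibre_idx C \<psi> j))) [0..<card_o C (tgt C \<psi>)]"

lemma coll_alpha_app:
  "Tr (Tr x \<psi> ys) \<phi> zs \<in> tens_carrier C (coll_tens C X Y) Z \<Longrightarrow>
   coll_fun (coll_alpha C X Y Z) (Tr (Tr x \<psi> ys) \<phi> zs) = Tr x (cmp C \<psi> \<phi>) (alpha_tuple C \<psi> \<phi> ys zs)"
  unfolding coll_alpha_def alpha_tuple_def by simp

lemma alpha_tuple_map:
  assumes "length ys = card_o C (tgt C \<psi>)" "length zs = card_o C (src C \<psi>)"
  shows "alpha_tuple C \<psi> \<phi> (map g ys) (map h zs) =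
    map (\<lambda>e. Tr (g (el_x e)) (el_mor e) (map h (el_ys e))) (alpha_tuple C \<psi> \<phi> ys zs)"
  using assms by (auto simp: alpha_tuple_def sfibl_def)

section \<open>Operadic categories\<close>

locale operadic =
  fixes C :: "('o, 'm) opcat"
  assumes operadic: "operadic_category C"
begin

lemma cat_ax: "is_cat C"
  and card_functor_ax: "card_functor C"
  and fibre_functors_ax: "fibre_functors C"
  and fibre_card_compat_ax: "fibre_card_compat C"
  and double_slice_ax: "double_slice C"
  using operadic unfolding operadic_category_def by blast+

lemma mors_src: "f \<in> mors C \<Longrightarrow> src C f \<in> obs C"
  and mors_tgt: "f \<in> mors C \<Longrightarrow> tgt C f \<in> obs C"
  and idm_mors: "a \<in> obs C \<Longrightarrow> idm C a \<in> mors C"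
  and idm_src [simp]: "a \<in> obs C \<Longrightarrow> src C (idm C a) = a"
  and idm_tgt [simp]: "a \<in> obs C \<Longrightarrow> tgt C (idm C a) = a"
  and cmp_mors: "f \<in> mors C \<Longrightarrow> g \<in> mors C \<Longrightarrow> tgt C f = src C g \<Longrightarrow> cmp C g f \<in> mors C"
  and cmp_src [simp]: "f \<in> mors C \<Longrightarrow> g \<in> mors C \<Longrightarrow> tgt C f = src C g \<Longrightarrow> src C (cmp C g f) = src C f"
  and cmp_tgt [simp]: "f \<in> mors C \<Longrightarrow> g \<in> mors C \<Longrightarrow> tgt C f = src C g \<Longrightarrow> tgt C (cmp C g f) = tgt C g"
  and cmp_assoc: "f \<in> mors C \<Longrightarrow> g \<in> mors C \<Longrightarrow> h \<in> mors C \<Longrightarrow> tgt C f = src C g \<Longrightarrow>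
    tgt C g = src C h \<Longrightarrow> cmp C h (cmp C g f) = cmp C (cmp C h g) f"
  and cmp_idm_left: "f \<in> mors C \<Longrightarrow> cmp C (idm C (tgt C f)) f = f"
  and cmp_idm_right: "f \<in> mors C \<Longrightarrow> cmp C f (idm C (src C f)) = f"
  using cat_ax unfolding is_cat_def by blast+

lemma card_m_less: "f \<in> mors C \<Longrightarrow> k < card_o C (src C f) \<Longrightarrow> card_m C f k < card_o C (tgt C f)"
  and card_m_idm: "a \<in> obs C \<Longrightarrow> k < card_o C a \<Longrightarrow> card_m C (idm C a) k = k"
  and card_m_cmp: "f \<in> mors C \<Longrightarrow> g \<in> mors C \<Longrightarrow> tgt C f = src C g \<Longrightarrow> k < card_o C (src C f) \<Longrightarrow>
    card_m C (cmp C g f) k = card_m C g (card_m C f k)"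
  using card_functor_ax unfolding card_functor_def by blast+

lemma fibre_m_mors: "\<phi> \<in> mors C \<Longrightarrow> \<psi> \<in> mors C \<Longrightarrow> tgt C \<phi> = src C \<psi> \<Longrightarrow>
    i < card_o C (tgt C \<psi>) \<Longrightarrow> fibre_m C \<phi> \<psi> i \<in> mors C"
  and fibre_m_src [simp]: "\<phi> \<in> mors C \<Longrightarrow> \<psi> \<in> mors C \<Longrightarrow> tgt C \<phi> = src C \<psi> \<Longrightarrow>
    i < card_o C (tgt C \<psi>) \<Longrightarrow> src C (fibre_m C \<phi> \<psi> i) = fibre C (cmp C \<psi> \<phi>) i"
  and fibre_m_tgt [simp]: "\<phi> \<in> mors C \<Longrightarrow> \<psi> \<in> mors C \<Longrightarrow> tgt C \<phi> = src C \<psi> \<Longrightarrow>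
    i < card_o C (tgt C \<psi>) \<Longrightarrow> tgt C (fibre_m C \<phi> \<psi> i) = fibre C \<psi> i"
  and fibre_m_idm: "\<psi> \<in> mors C \<Longrightarrow> i < card_o C (tgt C \<psi>) \<Longrightarrow>
    fibre_m C (idm C (src C \<psi>)) \<psi> i = idm C (fibre C \<psi> i)"
  and fibre_m_cmp: "\<phi>1 \<in> mors C \<Longrightarrow> \<phi>2 \<in> mors C \<Longrightarrow> \<psi> \<in> mors C \<Longrightarrow>
    tgt C \<phi>1 = src C \<phi>2 \<Longrightarrow> tgt C \<phi>2 = src C \<psi> \<Longrightarrow> i < card_o C (tgt C \<psi>) \<Longrightarrow>
    fibre_m C (cmp C \<phi>2 \<phi>1) \<psi> i = cmp C (fibre_m C \<phi>2 \<psi> i) (fibre_m C \<phi>1 (cmp C \<psi> \<phi>2) i)"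
  using fibre_functors_ax unfolding fibre_functors_def by blast+

lemma card_fibre: "\<psi> \<in> mors C \<Longrightarrow> i < card_o C (tgt C \<psi>) \<Longrightarrow>
    card_o C (fibre C \<psi> i) = length (fibre_idx C \<psi> i)"
  and card_m_fibre_m: "\<phi> \<in> mors C \<Longrightarrow> \<psi> \<in> mors C \<Longrightarrow> tgt C \<phi> = src C \<psi> \<Longrightarrow>
    i < card_o C (tgt C \<psi>) \<Longrightarrow> k < card_o C (fibre C (cmp C \<psi> \<phi>) i) \<Longrightarrow>
    card_m C (fibre_m C \<phi> \<psi> i) k =
      sidx (card_m C \<psi>) (card_m C \<phi> (sfibl (card_m C (cmp C \<psi> \<phi>)) (card_o C (src C \<phi>)) i ! k))"
  using fibre_card_compat_ax unfolding fibre_card_compat_def by blast+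

lemma fibre_idm_trivial: "a \<in> obs C \<Longrightarrow> i < card_o C a \<Longrightarrow> trivial_ob C (fibre C (idm C a) i)"
  using operadic unfolding operadic_category_def by blast

lemma double_slice_fibre: "\<phi> \<in> mors C \<Longrightarrow> \<psi> \<in> mors C \<Longrightarrow> tgt C \<phi> = src C \<psi> \<Longrightarrow>
    k < card_o C (src C \<psi>) \<Longrightarrow>
    fibre C \<phi> k = fibre C (fibre_m C \<phi> \<psi> (card_m C \<psi> k)) (sidx (card_m C \<psi>) k)"
  and double_slice_fibre_m: "\<sigma> \<in> mors C \<Longrightarrow> \<phi> \<in> mors C \<Longrightarrow> \<psi> \<in> mors C \<Longrightarrow>
    tgt C \<sigma> = src C \<phi> \<Longrightarrow> tgt C \<phi> = src C \<psi> \<Longrightarrow> k < card_o C (src C \<psi>) \<Longrightarrow>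
    fibre_m C \<sigma> \<phi> k = fibre_m C (fibre_m C \<sigma> (cmp C \<psi> \<phi>) (card_m C \<psi> k))
      (fibre_m C \<phi> \<psi> (card_m C \<psi> k)) (sidx (card_m C \<psi>) k)"
  using double_slice_ax unfolding double_slice_def by blast+

lemma trivial_ob_obs: "trivial_ob C u \<Longrightarrow> u \<in> obs C"
  and trivial_ob_card: "trivial_ob C u \<Longrightarrow> card_o C u = 1"
  and trivial_ob_fibre: "trivial_ob C u \<Longrightarrow> f \<in> mors C \<Longrightarrow> tgt C f = u \<Longrightarrow> fibre C f 0 = src C f"
  and trivial_ob_fibre_m: "trivial_ob C u \<Longrightarrow> \<phi> \<in> mors C \<Longrightarrow> f \<in> mors C \<Longrightarrow> tgt C \<phi> = src C f \<Longrightarrow>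
    tgt C f = u \<Longrightarrow> fibre_m C \<phi> f 0 = \<phi>"
  unfolding trivial_ob_def by blast+

lemma sfibl_card_m_idm: "a \<in> obs C \<Longrightarrow> j < card_o C a \<Longrightarrow> sfibl (card_m C (idm C a)) (card_o C a) j = [j]"
  using sfibl_cong[of "card_o C a" "card_m C (idm C a)" "\<lambda>k. k" j] card_m_idm sfibl_id by simp

lemma coll_tens_obs: "coll_tens C A B \<in> coll_obs C"
proof -
  have "src C (el_mor e) \<in> obs C" if "e \<in> tens_carrier C A B" for e
    using that by (auto simp: tens_carrier_def mors_src)
  then show ?thesis unfolding coll_obs_def coll_tens_def by auto
qed

lemma coll_unit_obs: "coll_unit C \<in> coll_obs C"
  unfolding coll_obs_def coll_unit_def by (auto simp: trivial_ob_obs)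

lemma alpha_tuple_in_carrier:
  assumes m: "Tr (Tr x \<psi> ys) \<phi> zs \<in> tens_carrier C (coll_tens C X Y) Z"
  shows "Tr x (cmp C \<psi> \<phi>) (alpha_tuple C \<psi> \<phi> ys zs) \<in> tens_carrier C X (coll_tens C Y Z)"
proof -
  note E = tens2_carrierD[OF m]
  have "Tr (ys ! j) (fibre_m C \<phi> \<psi> j) (map ((!) zs) (fibre_idx C \<psi> j)) \<in> tens_carrier C Y Z"
    if j: "j < card_o C (tgt C \<psi>)" for j
  proof -
    have "zs ! (fibre_idx C \<psi> j ! k) \<in> fst Z \<and>
        snd Z (zs ! (fibre_idx C \<psi> j ! k)) = fibre C (fibre_m C \<phi> \<psi> j) k"
      if k: "k < length (fibre_idx C \<psi> j)" for k
    proof -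
      let ?i = "fibre_idx C \<psi> j ! k"
      have "?i < card_o C (src C \<psi>)" "card_m C \<psi> ?i = j" "sidx (card_m C \<psi>) ?i = k"
        using sfibl_nth[OF k] sfibl_sidx[OF k] by auto
      \<comment> \<open>the double slice condition: \<phi>\<inverse> ?i is the k-th fibre of \<phi>^\<psi>_j\<close>
      then show ?thesis using E double_slice_fibre[of \<phi> \<psi> ?i] by auto
    qed
    then show ?thesis using E j card_fibre[of \<psi> j] by (auto simp: tens_carrier_iff fibre_m_mors)
  qed
  then show ?thesis using E by (auto simp: tens_carrier_iff alpha_tuple_def cmp_mors)
qed

lemma coll_alpha_hom:
  "coll_alpha C X Y Z \<in> coll_hom (coll_tens C (coll_tens C X Y) Z) (coll_tens C X (coll_tens C Y Z))"
proof -
  have "coll_alpha C X Y Z = (coll_tens C (coll_tens C X Y) Z,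
      restrict (coll_fun (coll_alpha C X Y Z)) (fst (coll_tens C (coll_tens C X Y) Z)),
      coll_tens C X (coll_tens C Y Z))"
    unfolding coll_alpha_def by simp
  also have "\<dots> \<in> coll_hom (coll_tens C (coll_tens C X Y) Z) (coll_tens C X (coll_tens C Y Z))"
  proof (rule coll_homI)
    fix e assume "e \<in> fst (coll_tens C (coll_tens C X Y) Z)"
    then obtain x \<psi> ys \<phi> zs where e: "e = Tr (Tr x \<psi> ys) \<phi> zs"
      and m: "Tr (Tr x \<psi> ys) \<phi> zs \<in> tens_carrier C (coll_tens C X Y) Z"
      by (rule coll_tens2E)
    show "coll_fun (coll_alpha C X Y Z) e \<in> fst (coll_tens C X (coll_tens C Y Z))"
      and "snd (coll_tens C X (coll_tens C Y Z)) (coll_fun (coll_alpha C X Y Z) e) =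
        snd (coll_tens C (coll_tens C X Y) Z) e"
      using alpha_tuple_in_carrier[OF m] tens2_carrierD[OF m] m by (simp_all add: e coll_alpha_app[OF m])
  qed
  finally show ?thesis .
qed

lemma coll_lambda_hom: "coll_lambda C X \<in> coll_hom (coll_tens C (coll_unit C) X) X"
  unfolding coll_lambda_def fst_coll_tens[symmetric]
proof (rule coll_homI)
  fix e assume "e \<in> fst (coll_tens C (coll_unit C) X)"
  then obtain u \<phi> ys where e: "e = Tr u \<phi> ys" and m: "Tr u \<phi> ys \<in> tens_carrier C (coll_unit C) X"
    by (rule coll_tensE)
  then obtain v where v: "u = TObj v" "trivial_ob C v" by (auto simp: tens_carrier_iff coll_unit_iff)
  then have "length ys = 1" "\<phi> \<in> mors C" "tgt C \<phi> = v"
    using m by (auto simp: tens_carrier_iff trivial_ob_card)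
  then show "el_ys e ! 0 \<in> fst X" "snd X (el_ys e ! 0) = snd (coll_tens C (coll_unit C) X) e"
    using m v trivial_ob_fibre[of v \<phi>] snd_coll_tens[OF m] by (auto simp: tens_carrier_iff e)
qed

lemma rho_in_carrier:
  assumes "X \<in> coll_obs C" "x \<in> fst X"
  shows "Tr x (idm C (snd X x)) (unit_tuple C (snd X x)) \<in> tens_carrier C X (coll_unit C)"
proof -
  have "snd X x \<in> obs C" using coll_obs_snd[OF assms] .
  then show ?thesis using assms by (auto simp: tens_carrier_iff unit_tuple_def idm_mors fibre_idm_trivial)
qed

lemma coll_rho_hom:
  assumes X: "X \<in> coll_obs C"
  shows "coll_rho C X \<in> coll_hom X (coll_tens C X (coll_unit C))"
proof -
  have "coll_rho C X = (X, restrict (coll_fun (coll_rho C X)) (fst X), coll_tens C X (coll_unit C))"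
    unfolding coll_rho_def by simp
  also have "\<dots> \<in> coll_hom X (coll_tens C X (coll_unit C))"
    using rho_in_carrier[OF X] coll_obs_snd[OF X] by (intro coll_homI) (simp_all add: coll_rho_app)
  finally show ?thesis .
qed

lemma coll_alpha_natural:
  assumes f: "f \<in> coll_hom X X'" and g: "g \<in> coll_hom Y Y'" and h: "h \<in> coll_hom Z Z'"
  shows "coll_comp (coll_alpha C X' Y' Z') (coll_tensm C (coll_tensm C f g) h) =
         coll_comp (coll_tensm C f (coll_tensm C g h)) (coll_alpha C X Y Z)"
    (is "?lhs = ?rhs")
proof (rule coll_hom_eqI[OF coll_comp_hom[OF coll_tensm_hom[OF coll_tensm_hom[OF f g] h] coll_alpha_hom]
      coll_comp_hom[OF coll_alpha_hom coll_tensm_hom[OF f coll_tensm_hom[OF g h]]]])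
  fix e assume e: "e \<in> fst (coll_tens C (coll_tens C X Y) Z)"
  then obtain x \<psi> ys \<phi> zs where e_eq: "e = Tr (Tr x \<psi> ys) \<phi> zs"
    and m: "Tr (Tr x \<psi> ys) \<phi> zs \<in> tens_carrier C (coll_tens C X Y) Z"
    by (rule coll_tens2E)
  note E = tens2_carrierD[OF m]
  have t: "coll_fun (coll_tensm C (coll_tensm C f g) h) e =
      Tr (Tr (coll_fun f x) \<psi> (map (coll_fun g) ys)) \<phi> (map (coll_fun h) zs)"
    by (simp add: e_eq coll_tensm_app[OF coll_tensm_hom[OF f g] h m] coll_tensm_app[OF f g E(1)])
  have mt: "Tr (Tr (coll_fun f x) \<psi> (map (coll_fun g) ys)) \<phi> (map (coll_fun h) zs)
      \<in> tens_carrier C (coll_tens C X' Y') Z'"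
    using coll_hom_app(1)[OF coll_tensm_hom[OF coll_tensm_hom[OF f g] h] e] t by simp
  have ma: "Tr x (cmp C \<psi> \<phi>) (alpha_tuple C \<psi> \<phi> ys zs) \<in> tens_carrier C X (coll_tens C Y Z)"
    by (rule alpha_tuple_in_carrier[OF m])
  have "map (coll_fun (coll_tensm C g h)) (alpha_tuple C \<psi> \<phi> ys zs) =
      map (\<lambda>e. Tr (coll_fun g (el_x e)) (el_mor e) (map (coll_fun h) (el_ys e))) (alpha_tuple C \<psi> \<phi> ys zs)"
    using ma by (intro map_cong refl coll_tensm_app[OF g h]) (auto simp: tens_carrier_iff in_set_conv_nth)
  then have "coll_fun ?rhs e =
      Tr (coll_fun f x) (cmp C \<psi> \<phi>) (alpha_tuple C \<psi> \<phi> (map (coll_fun g) ys) (map (coll_fun h) zs))"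
    unfolding coll_comp_app[OF coll_alpha_hom e] unfolding e_eq coll_alpha_app[OF m]
    using E by (simp add: coll_tensm_app[OF f coll_tensm_hom[OF g h] ma] alpha_tuple_map)
  moreover have "coll_fun ?lhs e =
      Tr (coll_fun f x) (cmp C \<psi> \<phi>) (alpha_tuple C \<psi> \<phi> (map (coll_fun g) ys) (map (coll_fun h) zs))"
    unfolding coll_comp_app[OF coll_tensm_hom[OF coll_tensm_hom[OF f g] h] e] t coll_alpha_app[OF mt] ..
  ultimately show "coll_fun ?lhs e = coll_fun ?rhs e"
    by simp
qed

lemma coll_lambda_natural:
  assumes f: "f \<in> coll_hom X X'"
  shows "coll_comp f (coll_lambda C X) =
    coll_comp (coll_lambda C X') (coll_tensm C (coll_id (coll_unit C)) f)"
proof (rule coll_hom_eqI[OF coll_comp_hom[OF coll_lambda_hom f]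
      coll_comp_hom[OF coll_tensm_hom[OF coll_id_hom f] coll_lambda_hom]])
  fix e assume e: "e \<in> fst (coll_tens C (coll_unit C) X)"
  then obtain u \<phi> ys where e_eq: "e = Tr u \<phi> ys" and m: "Tr u \<phi> ys \<in> tens_carrier C (coll_unit C) X"
    by (rule coll_tensE)
  then obtain v where "u = TObj v" "trivial_ob C v" by (auto simp: tens_carrier_iff coll_unit_iff)
  then have "ys \<noteq> []" using m by (auto simp: tens_carrier_iff trivial_ob_card)
  moreover have "coll_fun (coll_tensm C (coll_id (coll_unit C)) f) e \<in> tens_carrier C (coll_unit C) X'"
    using coll_hom_app(1)[OF coll_tensm_hom[OF coll_id_hom f] e] by simp
  ultimately show "coll_fun (coll_comp f (coll_lambda C X)) e =
      coll_fun (coll_comp (coll_lambda C X') (coll_tensm C (coll_id (coll_unit C)) f)) e"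
    unfolding coll_comp_app[OF coll_lambda_hom e] coll_comp_app[OF coll_tensm_hom[OF coll_id_hom f] e]
    by (simp add: e_eq m coll_lambda_app coll_tensm_app[OF coll_id_hom f m] hd_conv_nth[symmetric] hd_map)
qed

lemma coll_rho_natural:
  assumes X: "X \<in> coll_obs C" and X': "X' \<in> coll_obs C" and f: "f \<in> coll_hom X X'"
  shows "coll_comp (coll_rho C X') f = coll_comp (coll_tensm C f (coll_id (coll_unit C))) (coll_rho C X)"
proof (rule coll_hom_eqI[OF coll_comp_hom[OF f coll_rho_hom[OF X']]
      coll_comp_hom[OF coll_rho_hom[OF X] coll_tensm_hom[OF f coll_id_hom]]])
  fix x assume x: "x \<in> fst X"
  have units: "set (unit_tuple C (snd X x)) \<subseteq> fst (coll_unit C)"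
    using coll_obs_snd[OF X x] by (auto simp: unit_tuple_def fibre_idm_trivial)
  show "coll_fun (coll_comp (coll_rho C X') f) x =
      coll_fun (coll_comp (coll_tensm C f (coll_id (coll_unit C))) (coll_rho C X)) x"
    using coll_hom_app[OF f x]
    by (simp add: coll_comp_app[OF f x] coll_comp_app[OF coll_rho_hom[OF X] x] coll_rho_app x
        coll_tensm_app[OF f coll_id_hom rho_in_carrier[OF X x]] map_coll_id[OF units])
qed

lemma coll_lambda_rho:
  "coll_comp (coll_lambda C (coll_unit C)) (coll_rho C (coll_unit C)) = coll_id (coll_unit C)"
proof (rule coll_hom_eqI[OF coll_comp_hom[OF coll_rho_hom[OF coll_unit_obs] coll_lambda_hom] coll_id_hom])
  fix x :: "('a, 'o, 'm) elt" assume x: "x \<in> fst (coll_unit C)"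
  then obtain u where u: "x = TObj u" "trivial_ob C u" by (auto simp: coll_unit_iff)
  then have "u \<in> obs C" "card_o C u = 1" "fibre C (idm C u) 0 = u"
    using trivial_ob_fibre[OF u(2), of "idm C u"] by (auto simp: trivial_ob_obs trivial_ob_card idm_mors)
  then show "coll_fun (coll_comp (coll_lambda C (coll_unit C)) (coll_rho C (coll_unit C))) x =
      coll_fun (coll_id (coll_unit C)) x"
    unfolding coll_comp_app[OF coll_rho_hom[OF coll_unit_obs] x] coll_rho_app[OF x] coll_id_app[OF x]
    using rho_in_carrier[OF coll_unit_obs x] u by (simp add: coll_lambda_app unit_tuple_def)
qed

lemma alpha_tuple_trivial:
  assumes "trivial_ob C (tgt C \<psi>)" "\<phi> \<in> mors C" "\<psi> \<in> mors C" "tgt C \<phi> = src C \<psi>"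
    and "length zs = card_o C (src C \<psi>)"
  shows "alpha_tuple C \<psi> \<phi> ys zs = [Tr (ys ! 0) \<phi> zs]"
proof -
  have one: "card_o C (tgt C \<psi>) = 1" using assms(1) by (rule trivial_ob_card)
  then have "fibre_idx C \<psi> 0 = [0..<length zs]"
    unfolding sfibl_def assms(5) using card_m_less[OF assms(3)] by (intro filter_True) fastforce
  then have "map ((!) zs) (fibre_idx C \<psi> 0) = zs" by (simp add: map_nth)
  then show ?thesis using assms one trivial_ob_fibre_m[OF assms(1)] by (simp add: alpha_tuple_def)
qed

lemma coll_lambda_alpha:
  "coll_comp (coll_lambda C (coll_tens C X Y)) (coll_alpha C (coll_unit C) X Y) =
   coll_tensm C (coll_lambda C X) (coll_id Y)" (is "?lhs = ?rhs")
proof (rule coll_hom_eqI[OF coll_comp_hom[OF coll_alpha_hom coll_lambda_hom]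
      coll_tensm_hom[OF coll_lambda_hom coll_id_hom]])
  fix e assume e: "e \<in> fst (coll_tens C (coll_tens C (coll_unit C) X) Y)"
  then obtain u \<psi> xs \<phi> zs where e_eq: "e = Tr (Tr u \<psi> xs) \<phi> zs"
    and m: "Tr (Tr u \<psi> xs) \<phi> zs \<in> tens_carrier C (coll_tens C (coll_unit C) X) Y"
    by (rule coll_tens2E)
  note E = tens2_carrierD[OF m]
  have "trivial_ob C (tgt C \<psi>)" using E by (auto simp: coll_unit_iff)
  then have "alpha_tuple C \<psi> \<phi> xs zs = [Tr (xs ! 0) \<phi> zs]"
    using E by (intro alpha_tuple_trivial) auto
  moreover have "set zs \<subseteq> fst Y" using E by (auto simp: in_set_conv_nth)
  ultimately show "coll_fun ?lhs e = coll_fun ?rhs e"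
    using alpha_tuple_in_carrier[OF m]
    by (simp add: e_eq coll_comp_app[OF coll_alpha_hom] m coll_alpha_app[OF m] coll_lambda_app
        coll_tensm_app[OF coll_lambda_hom coll_id_hom m] E(1) map_coll_id)
qed

lemma unit_tuple_fibre_idx:
  assumes \<psi>: "\<psi> \<in> mors C" and j: "j < card_o C (tgt C \<psi>)"
  shows "map ((!) (unit_tuple C (src C \<psi>))) (fibre_idx C \<psi> j) = unit_tuple C (fibre C \<psi> j)"
proof (rule nth_equalityI)
  show "length (map ((!) (unit_tuple C (src C \<psi>))) (fibre_idx C \<psi> j)) = length (unit_tuple C (fibre C \<psi> j))"
    using card_fibre[OF \<psi> j] by (simp add: unit_tuple_def)
  fix k assume "k < length (map ((!) (unit_tuple C (src C \<psi>))) (fibre_idx C \<psi> j))"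
  then have k: "k < length (fibre_idx C \<psi> j)" by simp
  let ?i = "fibre_idx C \<psi> j ! k"
  have i: "?i < card_o C (src C \<psi>)" "card_m C \<psi> ?i = j" "sidx (card_m C \<psi>) ?i = k"
    using sfibl_nth[OF k] sfibl_sidx[OF k] by auto
  then have "fibre C (idm C (src C \<psi>)) ?i = fibre C (idm C (fibre C \<psi> j)) k"
    using double_slice_fibre[of "idm C (src C \<psi>)" \<psi> ?i] fibre_m_idm[OF \<psi> j] \<psi>
    by (simp add: idm_mors mors_src)
  then show "map ((!) (unit_tuple C (src C \<psi>))) (fibre_idx C \<psi> j) ! k = unit_tuple C (fibre C \<psi> j) ! k"
    using k i card_fibre[OF \<psi> j] by (simp add: unit_tuple_def)
qed

lemma alpha_tuple_idm_src:
  "\<psi> \<in> mors C \<Longrightarrow> alpha_tuple C \<psi> (idm C (src C \<psi>)) ys (unit_tuple C (src C \<psi>)) =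
     map (\<lambda>j. Tr (ys ! j) (idm C (fibre C \<psi> j)) (unit_tuple C (fibre C \<psi> j))) [0..<card_o C (tgt C \<psi>)]"
  by (simp add: alpha_tuple_def fibre_m_idm unit_tuple_fibre_idx)

lemma coll_alpha_rho:
  assumes Y: "Y \<in> coll_obs C"
  shows "coll_comp (coll_alpha C X Y (coll_unit C)) (coll_rho C (coll_tens C X Y)) =
    coll_tensm C (coll_id X) (coll_rho C Y)" (is "?lhs = ?rhs")
proof (rule coll_hom_eqI[OF coll_comp_hom[OF coll_rho_hom[OF coll_tens_obs] coll_alpha_hom]
      coll_tensm_hom[OF coll_id_hom coll_rho_hom[OF Y]]])
  fix e assume e: "e \<in> fst (coll_tens C X Y)"
  then obtain x \<psi> ys where e_eq: "e = Tr x \<psi> ys" and m: "Tr x \<psi> ys \<in> tens_carrier C X Y"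
    by (rule coll_tensE)
  have E: "\<psi> \<in> mors C" "x \<in> fst X" "length ys = card_o C (tgt C \<psi>)"
    "\<forall>j<length ys. ys ! j \<in> fst Y \<and> snd Y (ys ! j) = fibre C \<psi> j"
    using m by (auto simp: tens_carrier_iff)
  have r: "coll_fun (coll_rho C (coll_tens C X Y)) e = Tr (Tr x \<psi> ys) (idm C (src C \<psi>)) (unit_tuple C (src C \<psi>))"
    unfolding coll_rho_app[OF e] unfolding e_eq using m by simp
  have mr: "Tr (Tr x \<psi> ys) (idm C (src C \<psi>)) (unit_tuple C (src C \<psi>)) \<in> tens_carrier C (coll_tens C X Y) (coll_unit C)"
    using rho_in_carrier[OF coll_tens_obs e] m unfolding e_eq by simp
  have "map (coll_fun (coll_rho C Y)) ys =
      map (\<lambda>j. Tr (ys ! j) (idm C (fibre C \<psi> j)) (unit_tuple C (fibre C \<psi> j))) [0..<card_o C (tgt C \<psi>)]"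
    using E by (auto intro!: nth_equalityI simp: coll_rho_app)
  then show "coll_fun ?lhs e = coll_fun ?rhs e"
    unfolding coll_comp_app[OF coll_rho_hom[OF coll_tens_obs] e] r coll_alpha_app[OF mr]
    unfolding e_eq using E
    by (simp add: coll_tensm_app[OF coll_id_hom coll_rho_hom[OF Y] m] coll_id_app cmp_idm_right alpha_tuple_idm_src)
qed

lemma coll_lambda_alpha_tuple_idm_tgt:
  assumes "Tr x \<psi> (alpha_tuple C (idm C (tgt C \<psi>)) \<psi> us ys) \<in> tens_carrier C X (coll_tens C (coll_unit C) Y)"
    and "length ys = card_o C (tgt C \<psi>)"
  shows "map (coll_fun (coll_lambda C Y)) (alpha_tuple C (idm C (tgt C \<psi>)) \<psi> us ys) = ys"
proof (rule nth_equalityI)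
  have d: "\<psi> \<in> mors C" "tgt C \<psi> \<in> obs C" using assms(1) by (auto simp: tens_carrier_iff mors_tgt)
  then show "length (map (coll_fun (coll_lambda C Y)) (alpha_tuple C (idm C (tgt C \<psi>)) \<psi> us ys)) = length ys"
    using assms(2) by (simp add: alpha_tuple_def)
  fix j assume "j < length (map (coll_fun (coll_lambda C Y)) (alpha_tuple C (idm C (tgt C \<psi>)) \<psi> us ys))"
  then have j: "j < card_o C (tgt C \<psi>)" using d by (simp add: alpha_tuple_def)
  then have "alpha_tuple C (idm C (tgt C \<psi>)) \<psi> us ys ! j = Tr (us ! j) (fibre_m C \<psi> (idm C (tgt C \<psi>)) j) [ys ! j]"
    using d by (simp add: alpha_tuple_def sfibl_card_m_idm)
  moreover have "alpha_tuple C (idm C (tgt C \<psi>)) \<psi> us ys ! j \<in> tens_carrier C (coll_unit C) Y"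
    using assms(1) j d by (auto simp: tens_carrier_iff)
  ultimately show "map (coll_fun (coll_lambda C Y)) (alpha_tuple C (idm C (tgt C \<psi>)) \<psi> us ys) ! j = ys ! j"
    using j d by (simp add: coll_lambda_app alpha_tuple_def)
qed

lemma coll_triangle:
  assumes X: "X \<in> coll_obs C"
  shows "coll_comp (coll_comp (coll_tensm C (coll_id X) (coll_lambda C Y)) (coll_alpha C X (coll_unit C) Y))
      (coll_tensm C (coll_rho C X) (coll_id Y)) = coll_id (coll_tens C X Y)"
    (is "?lhs = ?rhs")
proof (rule coll_hom_eqI[OF coll_comp_hom[OF coll_tensm_hom[OF coll_rho_hom[OF X] coll_id_hom]
      coll_comp_hom[OF coll_alpha_hom coll_tensm_hom[OF coll_id_hom coll_lambda_hom]]] coll_id_hom])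
  fix e assume e: "e \<in> fst (coll_tens C X Y)"
  then obtain x \<psi> ys where e_eq: "e = Tr x \<psi> ys" and m: "Tr x \<psi> ys \<in> tens_carrier C X Y"
    by (rule coll_tensE)
  define d where "d = tgt C \<psi>"
  have E: "\<psi> \<in> mors C" "d \<in> obs C" "x \<in> fst X" "snd X x = d" "length ys = card_o C d" "set ys \<subseteq> fst Y"
    using m by (auto simp: tens_carrier_iff d_def mors_tgt in_set_conv_nth)
  have t: "coll_fun (coll_tensm C (coll_rho C X) (coll_id Y)) e = Tr (Tr x (idm C d) (unit_tuple C d)) \<psi> ys"
    unfolding e_eq using E
    by (simp add: coll_tensm_app[OF coll_rho_hom[OF X] coll_id_hom m] coll_rho_app map_coll_id)
  have mt: "Tr (Tr x (idm C d) (unit_tuple C d)) \<psi> ys \<in> tens_carrier C (coll_tens C X (coll_unit C)) Y"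
    using coll_hom_app(1)[OF coll_tensm_hom[OF coll_rho_hom[OF X] coll_id_hom] e] t by simp
  have ma: "Tr x \<psi> (alpha_tuple C (idm C d) \<psi> (unit_tuple C d) ys) \<in> tens_carrier C X (coll_tens C (coll_unit C) Y)"
    using alpha_tuple_in_carrier[OF mt] E by (simp add: d_def cmp_idm_left)
  show "coll_fun ?lhs e = coll_fun ?rhs e"
    unfolding coll_comp_app[OF coll_tensm_hom[OF coll_rho_hom[OF X] coll_id_hom] e] t
      coll_comp_app[OF coll_alpha_hom mt[folded fst_coll_tens]] coll_alpha_app[OF mt] coll_id_app[OF e]
    using E ma coll_lambda_alpha_tuple_idm_tgt[of x \<psi> "unit_tuple C d" ys X Y]
    by (simp add: d_def cmp_idm_left coll_tensm_app[OF coll_id_hom coll_lambda_hom] coll_id_app e_eq)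
qed

subsection \<open>The pentagon\<close>

lemma fibre_idx_fibre_m:
  assumes \<chi>: "\<chi> \<in> mors C" and \<psi>: "\<psi> \<in> mors C" and t: "tgt C \<psi> = src C \<chi>"
    and k: "k < card_o C (tgt C \<chi>)" and l: "l < length (fibre_idx C \<chi> k)"
  shows "map ((!) (fibre_idx C (cmp C \<chi> \<psi>) k)) (fibre_idx C (fibre_m C \<psi> \<chi> k) l) =
    fibre_idx C \<psi> (fibre_idx C \<chi> k ! l)"
proof -
  define L where "L = sfibl (card_m C (cmp C \<chi> \<psi>)) (card_o C (src C \<psi>)) k"
  define j where "j = fibre_idx C \<chi> k ! l"
  have L: "fibre_idx C (cmp C \<chi> \<psi>) k = L" using \<chi> \<psi> t by (simp add: L_def)
  have lenL: "card_o C (src C (fibre_m C \<psi> \<chi> k)) = length L"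
    using card_fibre[of "cmp C \<chi> \<psi>" k] \<chi> \<psi> t k by (simp add: L_def cmp_mors)
  have "fibre_idx C (fibre_m C \<psi> \<chi> k) l =
      filter (\<lambda>m. sidx (card_m C \<chi>) (card_m C \<psi> (L ! m)) = l) [0..<length L]"
    unfolding lenL sfibl_def[of "card_m C (fibre_m C \<psi> \<chi> k)"]
    using card_m_fibre_m[of \<psi> \<chi> k] \<chi> \<psi> t k lenL by (intro filter_cong) (auto simp: L_def)
  then have "map ((!) L) (fibre_idx C (fibre_m C \<psi> \<chi> k) l) =
      filter (\<lambda>i. sidx (card_m C \<chi>) (card_m C \<psi> i) = l) L"
    using map_nth_filter[of L "\<lambda>i. sidx (card_m C \<chi>) (card_m C \<psi> i) = l"] by simp
  also have "\<dots> = filter (\<lambda>i. card_m C \<chi> (card_m C \<psi> i) = k \<and> sidx (card_m C \<chi>) (card_m C \<psi> i) = l)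
      [0..<card_o C (src C \<psi>)]"
    unfolding L_def sfibl_def[of "card_m C (cmp C \<chi> \<psi>)"] filter_filter
    using card_m_cmp[of \<psi> \<chi>] \<chi> \<psi> t by (intro filter_cong) auto
  also have "\<dots> = filter (\<lambda>i. card_m C \<psi> i = j) [0..<card_o C (src C \<psi>)]"
  proof (intro filter_cong refl)
    fix i assume "i \<in> set [0..<card_o C (src C \<psi>)]"
    then have "card_m C \<psi> i < card_o C (src C \<chi>)" using card_m_less[OF \<psi>] t by simp
    then show "(card_m C \<chi> (card_m C \<psi> i) = k \<and> sidx (card_m C \<chi>) (card_m C \<psi> i) = l) \<longleftrightarrow> card_m C \<psi> i = j"
      using sfibl_nth_eq_iff[OF _ l] unfolding j_def by metis
  qed
  finally show ?thesis unfolding L j_def by (simp only: sfibl_def)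
qed

lemma alpha_tuple_fibre_m:
  assumes mors: "\<phi> \<in> mors C" "\<psi> \<in> mors C" "\<chi> \<in> mors C" "tgt C \<phi> = src C \<psi>" "tgt C \<psi> = src C \<chi>"
    and k: "k < card_o C (tgt C \<chi>)"
  shows "alpha_tuple C (fibre_m C \<psi> \<chi> k) (fibre_m C \<phi> (cmp C \<chi> \<psi>) k)
      (map ((!) ys) (fibre_idx C \<chi> k)) (map ((!) zs) (fibre_idx C (cmp C \<chi> \<psi>) k)) =
    map ((!) (alpha_tuple C \<psi> \<phi> ys zs)) (fibre_idx C \<chi> k)"
proof (rule nth_equalityI)
  have len_tgt: "card_o C (tgt C (fibre_m C \<psi> \<chi> k)) = length (fibre_idx C \<chi> k)"
    using card_fibre[OF mors(3) k] mors k by simp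
  then show "length (alpha_tuple C (fibre_m C \<psi> \<chi> k) (fibre_m C \<phi> (cmp C \<chi> \<psi>) k)
      (map ((!) ys) (fibre_idx C \<chi> k)) (map ((!) zs) (fibre_idx C (cmp C \<chi> \<psi>) k))) =
    length (map ((!) (alpha_tuple C \<psi> \<phi> ys zs)) (fibre_idx C \<chi> k))"
    by (simp add: alpha_tuple_def)
  fix l assume "l < length (alpha_tuple C (fibre_m C \<psi> \<chi> k) (fibre_m C \<phi> (cmp C \<chi> \<psi>) k)
      (map ((!) ys) (fibre_idx C \<chi> k)) (map ((!) zs) (fibre_idx C (cmp C \<chi> \<psi>) k)))"
  then have l: "l < length (fibre_idx C \<chi> k)" using len_tgt by (simp add: alpha_tuple_def)
  define j where "j = fibre_idx C \<chi> k ! l"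
  have j: "j < card_o C (tgt C \<psi>)" "card_m C \<chi> j = k" "sidx (card_m C \<chi>) j = l"
    using sfibl_nth[OF l] sfibl_sidx[OF l] mors by (auto simp: j_def)
  have "fibre_m C (fibre_m C \<phi> (cmp C \<chi> \<psi>) k) (fibre_m C \<psi> \<chi> k) l = fibre_m C \<phi> \<psi> j"
    using double_slice_fibre_m[of \<phi> \<psi> \<chi> j] mors j by simp
  moreover have "map ((!) (map ((!) zs) (fibre_idx C (cmp C \<chi> \<psi>) k))) (fibre_idx C (fibre_m C \<psi> \<chi> k) l) =
      map ((!) zs) (fibre_idx C \<psi> j)"
  proof -
    have "card_o C (src C (fibre_m C \<psi> \<chi> k)) = length (fibre_idx C (cmp C \<chi> \<psi>) k)"
      using card_fibre[of "cmp C \<chi> \<psi>" k] mors k by (simp add: cmp_mors)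
    then have "map ((!) (map ((!) zs) (fibre_idx C (cmp C \<chi> \<psi>) k))) (fibre_idx C (fibre_m C \<psi> \<chi> k) l) =
        map ((!) zs) (map ((!) (fibre_idx C (cmp C \<chi> \<psi>) k)) (fibre_idx C (fibre_m C \<psi> \<chi> k) l))"
      by (auto simp: sfibl_def)
    then show ?thesis unfolding fibre_idx_fibre_m[OF mors(3,2,5) k l] j_def .
  qed
  ultimately show "alpha_tuple C (fibre_m C \<psi> \<chi> k) (fibre_m C \<phi> (cmp C \<chi> \<psi>) k)
      (map ((!) ys) (fibre_idx C \<chi> k)) (map ((!) zs) (fibre_idx C (cmp C \<chi> \<psi>) k)) ! l =
    map ((!) (alpha_tuple C \<psi> \<phi> ys zs)) (fibre_idx C \<chi> k) ! l"
    using l len_tgt j mors by (simp add: alpha_tuple_def j_def)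
qed

lemma map_coll_alpha_alpha_tuple:
  assumes mors: "\<phi> \<in> mors C" "\<psi> \<in> mors C" "\<chi> \<in> mors C" "tgt C \<phi> = src C \<psi>" "tgt C \<psi> = src C \<chi>"
    and leaves: "set (alpha_tuple C (cmp C \<chi> \<psi>) \<phi> (alpha_tuple C \<chi> \<psi> xs ys) zs) \<subseteq> tens_carrier C (coll_tens C X Y) Z"
  shows "map (coll_fun (coll_alpha C X Y Z)) (alpha_tuple C (cmp C \<chi> \<psi>) \<phi> (alpha_tuple C \<chi> \<psi> xs ys) zs) =
    alpha_tuple C \<chi> (cmp C \<psi> \<phi>) xs (alpha_tuple C \<psi> \<phi> ys zs)"
proof (rule nth_equalityI)
  show "length (map (coll_fun (coll_alpha C X Y Z)) (alpha_tuple C (cmp C \<chi> \<psi>) \<phi> (alpha_tuple C \<chi> \<psi> xs ys) zs)) =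
      length (alpha_tuple C \<chi> (cmp C \<psi> \<phi>) xs (alpha_tuple C \<psi> \<phi> ys zs))"
    using mors by (simp add: alpha_tuple_def)
  fix k assume "k < length (map (coll_fun (coll_alpha C X Y Z))
      (alpha_tuple C (cmp C \<chi> \<psi>) \<phi> (alpha_tuple C \<chi> \<psi> xs ys) zs))"
  then have k: "k < card_o C (tgt C \<chi>)" using mors by (simp add: alpha_tuple_def)
  let ?M = "alpha_tuple C (cmp C \<chi> \<psi>) \<phi> (alpha_tuple C \<chi> \<psi> xs ys) zs"
  have Mk: "?M ! k = Tr (Tr (xs ! k) (fibre_m C \<psi> \<chi> k) (map ((!) ys) (fibre_idx C \<chi> k)))
      (fibre_m C \<phi> (cmp C \<chi> \<psi>) k) (map ((!) zs) (fibre_idx C (cmp C \<chi> \<psi>) k))"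
    using k mors by (simp add: alpha_tuple_def)
  have "?M ! k \<in> tens_carrier C (coll_tens C X Y) Z"
    using leaves k mors by (auto simp: alpha_tuple_def)
  then have "coll_fun (coll_alpha C X Y Z) (?M ! k) =
      Tr (xs ! k) (fibre_m C (cmp C \<psi> \<phi>) \<chi> k) (map ((!) (alpha_tuple C \<psi> \<phi> ys zs)) (fibre_idx C \<chi> k))"
    unfolding Mk using k mors alpha_tuple_fibre_m[OF mors k, of ys zs]
    by (simp add: coll_alpha_app fibre_m_cmp)
  then show "map (coll_fun (coll_alpha C X Y Z)) ?M ! k = alpha_tuple C \<chi> (cmp C \<psi> \<phi>) xs (alpha_tuple C \<psi> \<phi> ys zs) ! k"
    using k mors by (simp add: alpha_tuple_def[of C \<chi>] alpha_tuple_def[of C "cmp C \<chi> \<psi>"])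
qed

lemma coll_pentagon:
  "coll_comp (coll_comp (coll_tensm C (coll_id W) (coll_alpha C X Y Z)) (coll_alpha C W (coll_tens C X Y) Z))
      (coll_tensm C (coll_alpha C W X Y) (coll_id Z)) =
    coll_comp (coll_alpha C W X (coll_tens C Y Z)) (coll_alpha C (coll_tens C W X) Y Z)"
  (is "?lhs = ?rhs")
proof (rule coll_hom_eqI[OF coll_comp_hom[OF coll_tensm_hom[OF coll_alpha_hom coll_id_hom]
      coll_comp_hom[OF coll_alpha_hom coll_tensm_hom[OF coll_id_hom coll_alpha_hom]]]
      coll_comp_hom[OF coll_alpha_hom coll_alpha_hom]])
  fix e assume e: "e \<in> fst (coll_tens C (coll_tens C (coll_tens C W X) Y) Z)"
  then obtain v \<psi> ys \<phi> zs where e_eq: "e = Tr (Tr v \<psi> ys) \<phi> zs"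
    and m0: "Tr (Tr v \<psi> ys) \<phi> zs \<in> tens_carrier C (coll_tens C (coll_tens C W X) Y) Z"
    by (rule coll_tens2E)
  from tens2_carrierD(5)[OF m0] obtain w \<chi> xs where v: "v = Tr w \<chi> xs"
    by (rule coll_tensE)
  note m = m0[unfolded v]
  note E = tens2_carrierD[OF m] tens2_carrierD[OF tens2_carrierD(1)[OF m]]
  have mors: "\<phi> \<in> mors C" "\<psi> \<in> mors C" "\<chi> \<in> mors C" "tgt C \<phi> = src C \<psi>" "tgt C \<psi> = src C \<chi>"
    using E by auto
  have "set zs \<subseteq> fst Z" using E by (auto simp: in_set_conv_nth)
  then have l1: "coll_fun (coll_tensm C (coll_alpha C W X Y) (coll_id Z)) e =
      Tr (Tr w (cmp C \<chi> \<psi>) (alpha_tuple C \<chi> \<psi> xs ys)) \<phi> zs"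
    unfolding e_eq v using E
    by (simp add: coll_tensm_app[OF coll_alpha_hom coll_id_hom m] coll_alpha_app map_coll_id)
  have ml1: "Tr (Tr w (cmp C \<chi> \<psi>) (alpha_tuple C \<chi> \<psi> xs ys)) \<phi> zs \<in> tens_carrier C (coll_tens C W (coll_tens C X Y)) Z"
    using coll_hom_app(1)[OF coll_tensm_hom[OF coll_alpha_hom coll_id_hom] e] l1 by simp
  note ml2 = alpha_tuple_in_carrier[OF ml1]
  note mr1 = alpha_tuple_in_carrier[OF m]
  have "set (alpha_tuple C (cmp C \<chi> \<psi>) \<phi> (alpha_tuple C \<chi> \<psi> xs ys) zs) \<subseteq> tens_carrier C (coll_tens C X Y) Z"
    using ml2 by (auto simp: tens_carrier_iff in_set_conv_nth)
  then have "coll_fun ?lhs e =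
      Tr w (cmp C \<chi> (cmp C \<psi> \<phi>)) (alpha_tuple C \<chi> (cmp C \<psi> \<phi>) xs (alpha_tuple C \<psi> \<phi> ys zs))"
    unfolding coll_comp_app[OF coll_tensm_hom[OF coll_alpha_hom coll_id_hom] e] l1
      coll_comp_app[OF coll_alpha_hom ml1[folded fst_coll_tens]] coll_alpha_app[OF ml1]
      coll_tensm_app[OF coll_id_hom coll_alpha_hom ml2]
    using E mors by (simp add: coll_id_app map_coll_alpha_alpha_tuple cmp_assoc)
  moreover have "coll_fun ?rhs e =
      Tr w (cmp C \<chi> (cmp C \<psi> \<phi>)) (alpha_tuple C \<chi> (cmp C \<psi> \<phi>) xs (alpha_tuple C \<psi> \<phi> ys zs))"
    unfolding coll_comp_app[OF coll_alpha_hom e] unfolding e_eq v coll_alpha_app[OF m] coll_alpha_app[OF mr1] ..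
  ultimately show "coll_fun ?lhs e = coll_fun ?rhs e"
    by simp
qed

end

theorem theorem3p4:
  fixes C :: "('o, 'm) opcat"
  assumes "operadic_category C"
  shows "skew_monoidal_category
           (coll_obs C :: ('a, 'o, 'm) cobj set) coll_hom coll_comp coll_id
           (coll_tens C) (coll_tensm C) (coll_unit C)
           (coll_alpha C) (coll_lambda C) (coll_rho C)"
proof -
  interpret operadic C by (rule operadic.intro) (rule assms)
  show ?thesis
    unfolding skew_monoidal_category_def
    by (intro conjI ballI coll_is_category coll_tens_obs coll_tensm_hom coll_tensm_id coll_tensm_comp
        coll_unit_obs coll_alpha_hom coll_lambda_hom coll_rho_hom coll_alpha_natural coll_lambda_natural
        coll_rho_natural coll_lambda_rho coll_lambda_alpha coll_alpha_rho coll_triangle coll_pentagon)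
qed

end
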